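(* Let $\mathcal{X}=\langle P,K,V\rangle$ be a polyhedral model. For every cell $\tilde\sigma$ of $K$ and all $x,y\in\tilde\sigma$, $x\equiv y$, i.e. for every SLCS formula $\phi$, $\mathcal{X},x\models\phi\iff\mathcal{X},y\models\phi$. Consequently, for every formula $\phi$, $[\![\phi]\!]$ is a finite union of cells of $K$.
   Context: A $d$-simplex $\sigma\subseteq\mathbb{R}^m$ is the convex hull of $d+1$ affinely independent points $v_0,\dots,v_d$ (its vertices); the simplexes spanned by subsets of the vertices (including the empty simplex) are its faces, and $\tau\preceq\sigma$ means $\tau$ is a face of $\sigma$. The relative interior of $\sigma$ is $\tilde\sigma=\{\sum_i\lambda_iv_i:\lambda_i\in(0,1],\sum_i\lambda_i=1\}$. A simplicial complex $K$ is a finite set of simplexes of $\mathbb{R}^m$ closed under taking faces and such that the intersection of any two of its simplexes is a face of both. Its polyhedron is $|K|=\bigcup K$, with the subspace topology of $\mathbb{R}^m$; $\mathcal{C}$ and $\mathcal{I}$ denote closure and interior in this space. The cells of $K$ are the sets $\tilde\sigma$ for nonempty $\sigma\in K$; they form a partition $\tilde K$ of $|K|$. A path in a space $P$ is a continuous $\pi:[0,1]\to P$; $\pi(S)=\{\pi(s):s\in S\}$. Fix a finite set $AP$ of atomic propositions. A polyhedral model is $\mathcal{X}=\langle P,K,V\rangle$ with $K$ a simplicial complex, $P=|K|$, and $V:AP\to\mathcal{P}(P)$ such that each $V(p)$ is a union of cells of $K$ ($K$ is then called coherent with the model). SLCS formulas: $\phi::=\top\mid p\mid\neg\phi\mid\phi\wedge\phi\mid\Box\phi\mid\gamma(\phi,\phi)$,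 $p\in AP$. Semantics at $x\in P$, with $[\![\phi]\!]=\{x\in P:\mathcal{X},x\models\phi\}$: $\top$ always holds; $x\models p$ iff $x\in V(p)$; Boolean connectives as usual; $x\models\Box\phi$ iff $x\in\mathcal{I}([\![\phi]\!])$; $x\models\gamma(\phi,\psi)$ iff there is a path $\pi$ in $P$ with $\pi(0)=x$, $\pi((0,1))\subseteq[\![\phi]\!]$ and $\pi(1)\in[\![\psi]\!]$. Logical equivalence $\equiv$ on $P$: $x\equiv y$ iff $x$ and $y$ satisfy exactly the same SLCS formulas. *)

theory Defs
  imports "HOL-Analysis.Analysis"
begin

definition is_simplex :: "'a::euclidean_space set \<Rightarrow> bool" where
  "is_simplex \<sigma> \<longleftrightarrow> (\<exists>V. finite V \<and> \<not> affine_dependent V \<and> \<sigma> = convex hull V)"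

definition face_of_simplex :: "'a::euclidean_space set \<Rightarrow> 'a set \<Rightarrow> bool" where
  "face_of_simplex \<tau> \<sigma> \<longleftrightarrow>
     (\<exists>V W. finite V \<and> \<not> affine_dependent V \<and> \<sigma> = convex hull V \<and>
            W \<subseteq> V \<and> \<tau> = convex hull W)"

definition simplex_relint :: "'a::euclidean_space set \<Rightarrow> 'a set" where
  "simplex_relint \<sigma> =
     {x. \<exists>V. finite V \<and> \<not> affine_dependent V \<and> \<sigma> = convex hull V \<and>
            (\<exists>l. (\<forall>v\<in>V. 0 < l v \<and> l v \<le> 1) \<and> sum l V = 1 \<and>
                 x = (\<Sum>v\<in>V. l v *\<^sub>R v))}"

definition simplicial_complex :: "'a::euclidean_space set set \<Rightarrow> bool" where
  "simplicial_complex K \<longleftrightarrow>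
     finite K \<and> (\<forall>\<sigma>\<in>K. is_simplex \<sigma>) \<and>
     (\<forall>\<sigma>\<in>K. \<forall>\<tau>. face_of_simplex \<tau> \<sigma> \<longrightarrow> \<tau> \<in> K) \<and>
     (\<forall>\<sigma>\<in>K. \<forall>\<tau>\<in>K. face_of_simplex (\<sigma> \<inter> \<tau>) \<sigma> \<and> face_of_simplex (\<sigma> \<inter> \<tau>) \<tau>)"

definition cells :: "'a::euclidean_space set set \<Rightarrow> 'a set set" where
  "cells K = {simplex_relint \<sigma> | \<sigma>. \<sigma> \<in> K \<and> \<sigma> \<noteq> {}}"

definition polyhedral_model ::
  "'a::euclidean_space set \<Rightarrow> 'a set set \<Rightarrow> ('p::finite \<Rightarrow> 'a set) \<Rightarrow> bool" where
  "polyhedral_model P K V \<longleftrightarrow>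
     simplicial_complex K \<and> P = \<Union>K \<and> (\<forall>p. \<exists>C. C \<subseteq> cells K \<and> V p = \<Union>C)"

datatype 'p slcs =
    STop
  | SAtom 'p
  | SNeg "'p slcs"
  | SAnd "'p slcs" "'p slcs"
  | SBox "'p slcs"
  | SGamma "'p slcs" "'p slcs"

fun sem :: "'a::euclidean_space set \<Rightarrow> ('p \<Rightarrow> 'a set) \<Rightarrow> 'p slcs \<Rightarrow> 'a set" where
  "sem P V STop = P"
| "sem P V (SAtom p) = P \<inter> V p"
| "sem P V (SNeg \<phi>) = P - sem P V \<phi>"
| "sem P V (SAnd \<phi> \<psi>) = sem P V \<phi> \<inter> sem P V \<psi>"
| "sem P V (SBox \<phi>) = (top_of_set P) interior_of (sem P V \<phi>)"
| "sem P V (SGamma \<phi> \<psi>) =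
     {x\<in>P. \<exists>\<pi>. path \<pi> \<and> path_image \<pi> \<subseteq> P \<and> pathstart \<pi> = x \<and>
              \<pi> ` {0<..<1} \<subseteq> sem P V \<phi> \<and> pathfinish \<pi> \<in> sem P V \<psi>}"

end

theory Submission
  imports Defs
begin

text \<open>Call a set cell-saturated if it does not separate two points of the same cell. Atoms are
  cell-saturated, and saturation is preserved by the Boolean connectives, by \<open>\<Box>\<close> and by \<open>\<gamma>\<close>.
  The two modal cases rest on the open star of a cell \<open>\<sigma>\<close>: the points of the polyhedron near
  any point of \<open>\<sigma>\<close> lie in cells of simplexes having \<open>\<sigma>\<close> as a face, and a point of \<open>\<sigma>\<close> lies in
  the closure of each such cell. For \<open>\<Box>\<close> this moves a neighbourhood from one point of \<open>\<sigma>\<close> to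
  another; for \<open>\<gamma>\<close> a path leaving \<open>x \<in> \<sigma>\<close> soon enters such a cell, which \<open>y \<in> \<sigma>\<close> reaches
  along a straight segment running inside that cell.\<close>

lemma simplex_relint_eq_rel_interior:
  assumes "is_simplex \<sigma>"
  shows "simplex_relint \<sigma> = rel_interior \<sigma>"
proof
  show "simplex_relint \<sigma> \<subseteq> rel_interior \<sigma>"
    by (force simp: simplex_relint_def rel_interior_convex_hull_explicit)
next
  show "rel_interior \<sigma> \<subseteq> simplex_relint \<sigma>"
  proof
    fix x assume x: "x \<in> rel_interior \<sigma>"
    obtain W where W: "finite W" "\<not> affine_dependent W" "\<sigma> = convex hull W"
      using assms unfolding is_simplex_def by blast
    then obtain l where l: "\<forall>v\<in>W. 0 < l v" "sum l W = 1" "x = (\<Sum>v\<in>W. l v *\<^sub>R v)"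
      using x rel_interior_convex_hull_explicit[OF W(2)] by auto
    have "l v \<le> 1" if "v \<in> W" for v
      using member_le_sum[of v W l] l W(1) that by (simp add: less_imp_le)
    then show "x \<in> simplex_relint \<sigma>"
      unfolding simplex_relint_def using W l by blast
  qed
qed

lemma simplicial_complex_simplex:
  "simplicial_complex K \<Longrightarrow> \<sigma> \<in> K \<Longrightarrow> is_simplex \<sigma>"
  unfolding simplicial_complex_def by blast

lemma simplex_convex_closed:
  assumes "is_simplex \<sigma>"
  shows "convex \<sigma>" "closed \<sigma>"
  using assms by (auto simp: is_simplex_def compact_imp_closed compact_convex_hull finite_imp_compact)

lemma cells_eq_rel_interior_image:
  assumes "simplicial_complex K"
  shows "cells K = rel_interior ` {\<sigma>\<in>K. \<sigma> \<noteq> {}}"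
  using simplex_relint_eq_rel_interior[OF simplicial_complex_simplex[OF assms]]
  unfolding cells_def by auto

lemma simplicial_complex_in_cell:
  assumes K: "simplicial_complex K" and x: "x \<in> \<Union>K"
  obtains \<tau> where "\<tau> \<in> K" "x \<in> rel_interior \<tau>"
proof -
  obtain \<sigma> W where \<sigma>: "\<sigma> \<in> K" "x \<in> \<sigma>" and
    W: "finite W" "\<not> affine_dependent W" "\<sigma> = convex hull W"
    using K x unfolding simplicial_complex_def is_simplex_def by blast
  then obtain u where u: "\<forall>v\<in>W. 0 \<le> u v" "sum u W = 1" "(\<Sum>v\<in>W. u v *\<^sub>R v) = x"
    using convex_hull_finite[OF W(1)] by auto
  \<comment> \<open>\<open>x\<close> lies in the relative interior of the face spanned by the vertices it really uses\<close>
  define W' where "W' = {v\<in>W. 0 < u v}"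
  have sub: "W' \<subseteq> W" and zero: "\<forall>v\<in>W - W'. u v = 0"
    using u(1) unfolding W'_def by force+
  have s1: "sum u W' = 1"
    using sum.mono_neutral_left[OF W(1) sub zero] u(2) by simp
  have s2: "(\<Sum>v\<in>W'. u v *\<^sub>R v) = x"
    using sum.mono_neutral_left[OF W(1) sub, of "\<lambda>v. u v *\<^sub>R v"] zero u(3) by simp
  have ind: "\<not> affine_dependent W'"
    using W(2) sub affine_dependent_subset by blast
  have "x \<in> rel_interior (convex hull W')"
    using rel_interior_convex_hull_explicit[OF ind] s1 s2 unfolding W'_def by auto
  moreover have "convex hull W' \<in> K"
    using K \<sigma>(1) W sub unfolding simplicial_complex_def face_of_simplex_def by blast
  ultimately show ?thesis using that by blast
qed

lemma simplicial_complex_subset_if_rel_interior_meets: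
  assumes K: "simplicial_complex K" and "\<sigma> \<in> K" "\<tau> \<in> K"
    and x: "x \<in> rel_interior \<sigma>" "x \<in> \<tau>"
  shows "\<sigma> \<subseteq> \<tau>"
proof -
  obtain W W' where W: "\<not> affine_dependent W" "\<sigma> = convex hull W"
    "W' \<subseteq> W" "\<sigma> \<inter> \<tau> = convex hull W'"
    using assms unfolding simplicial_complex_def face_of_simplex_def by meson
  then have "(\<sigma> \<inter> \<tau>) face_of \<sigma>"
    using face_of_convex_hull_affine_independent by blast
  moreover have "x \<in> \<sigma>"
    using x(1) rel_interior_subset by blast
  ultimately have "\<sigma> \<subseteq> \<sigma> \<inter> \<tau>"
    using subset_of_face_of x by blast
  then show ?thesis by blast
qed

lemma simplicial_complex_rel_interior_disjoint:
  assumes "simplicial_complex K" "\<sigma> \<in> K" "\<tau> \<in> K"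
    and "x \<in> rel_interior \<sigma>" "x \<in> rel_interior \<tau>"
  shows "\<sigma> = \<tau>"
  using simplicial_complex_subset_if_rel_interior_meets[OF assms(1-3)]
    simplicial_complex_subset_if_rel_interior_meets[OF assms(1,3,2)]
    assms(4,5) rel_interior_subset by blast

lemma simplicial_complex_open_star:
  assumes K: "simplicial_complex K" and \<sigma>: "\<sigma> \<in> K" "x \<in> rel_interior \<sigma>"
  obtains U where "open U" "x \<in> U"
    "\<And>z. z \<in> U \<Longrightarrow> z \<in> \<Union>K \<Longrightarrow> \<exists>\<tau>\<in>K. \<sigma> \<subseteq> \<tau> \<and> z \<in> rel_interior \<tau>"
proof -
  define U where "U = - \<Union>{\<tau>\<in>K. x \<notin> \<tau>}"
  have "finite K" using K unfolding simplicial_complex_def by blast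
  then have "closed (\<Union>{\<tau>\<in>K. x \<notin> \<tau>})"
    using simplex_convex_closed(2)[OF simplicial_complex_simplex[OF K]] by (intro closed_Union) auto
  then have "open U" unfolding U_def by (simp add: open_Compl)
  moreover have "x \<in> U" unfolding U_def by blast
  moreover have "\<exists>\<tau>\<in>K. \<sigma> \<subseteq> \<tau> \<and> z \<in> rel_interior \<tau>" if z: "z \<in> U" "z \<in> \<Union>K" for z
  proof -
    obtain \<tau> where \<tau>: "\<tau> \<in> K" "z \<in> rel_interior \<tau>"
      using simplicial_complex_in_cell[OF K z(2)] by blast
    then have "x \<in> \<tau>"
      using z(1) rel_interior_subset unfolding U_def by blast
    then show ?thesis
      using \<tau> simplicial_complex_subset_if_rel_interior_meets[OF K \<sigma>(1) \<tau>(1) \<sigma>(2)] by blast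
  qed
  ultimately show ?thesis using that by blast
qed

definition cell_saturated :: "'a::euclidean_space set set \<Rightarrow> 'a set \<Rightarrow> bool" where
  "cell_saturated K S \<longleftrightarrow>
     (\<forall>\<sigma>\<in>K. \<forall>x\<in>rel_interior \<sigma>. \<forall>y\<in>rel_interior \<sigma>. x \<in> S \<longrightarrow> y \<in> S)"

lemma cell_saturatedD:
  "cell_saturated K S \<Longrightarrow> \<sigma> \<in> K \<Longrightarrow> x \<in> rel_interior \<sigma> \<Longrightarrow> x \<in> S \<Longrightarrow> rel_interior \<sigma> \<subseteq> S"
  unfolding cell_saturated_def by blast

lemma cell_saturated_Union_complex: "cell_saturated K (\<Union>K)"
  using rel_interior_subset unfolding cell_saturated_def by blast

lemma cell_saturated_Int:
  "cell_saturated K S \<Longrightarrow> cell_saturated K T \<Longrightarrow> cell_saturated K (S \<inter> T)"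
  unfolding cell_saturated_def by blast

lemma cell_saturated_Diff:
  "cell_saturated K S \<Longrightarrow> cell_saturated K T \<Longrightarrow> cell_saturated K (S - T)"
  unfolding cell_saturated_def by blast

lemma cell_saturated_Union_cells:
  assumes "simplicial_complex K" "C \<subseteq> cells K"
  shows "cell_saturated K (\<Union>C)"
  using assms simplicial_complex_rel_interior_disjoint[OF assms(1)]
  unfolding cell_saturated_def cells_eq_rel_interior_image[OF assms(1)] by blast

lemma cell_saturated_eq_Union_cells:
  assumes K: "simplicial_complex K" and S: "S \<subseteq> \<Union>K" "cell_saturated K S"
  shows "S = \<Union>{c\<in>cells K. c \<subseteq> S}"
proof (intro equalityI subsetI)
  fix x assume x: "x \<in> S"
  then obtain \<tau> where \<tau>: "\<tau> \<in> K" "x \<in> rel_interior \<tau>"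
    using simplicial_complex_in_cell[OF K] S(1) by blast
  then have "rel_interior \<tau> \<in> cells K"
    unfolding cells_eq_rel_interior_image[OF K] by auto
  moreover have "rel_interior \<tau> \<subseteq> S"
    using cell_saturatedD[OF S(2) \<tau> x] .
  ultimately show "x \<in> \<Union>{c\<in>cells K. c \<subseteq> S}"
    using \<tau>(2) by blast
qed blast

lemma in_interior_of_top_of_set:
  "x \<in> top_of_set P interior_of S \<longleftrightarrow> x \<in> P \<and> (\<exists>U. open U \<and> x \<in> U \<and> U \<inter> P \<subseteq> S)"
  by (auto simp: interior_of_def openin_open)

lemma cell_saturated_interior_of:
  assumes K: "simplicial_complex K" and S: "cell_saturated K S"
  shows "cell_saturated K (top_of_set (\<Union>K) interior_of S)"
  unfolding cell_saturated_def
proof (intro ballI impI)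
  fix \<sigma> x y assume \<sigma>: "\<sigma> \<in> K" and "x \<in> rel_interior \<sigma>" and y: "y \<in> rel_interior \<sigma>"
    and "x \<in> top_of_set (\<Union>K) interior_of S"
  then obtain U where U: "open U" "x \<in> U" "U \<inter> \<Union>K \<subseteq> S" and "x \<in> \<sigma>"
    using rel_interior_subset by (auto simp: in_interior_of_top_of_set)
  obtain Uy where Uy: "open Uy" "y \<in> Uy"
    and star: "\<And>z. z \<in> Uy \<Longrightarrow> z \<in> \<Union>K \<Longrightarrow> \<exists>\<tau>\<in>K. \<sigma> \<subseteq> \<tau> \<and> z \<in> rel_interior \<tau>"
    using simplicial_complex_open_star[OF K \<sigma> y] by blast
  have "z \<in> S" if z: "z \<in> Uy \<inter> \<Union>K" for z
  proof -
    obtain \<tau> where \<tau>: "\<tau> \<in> K" "\<sigma> \<subseteq> \<tau>" "z \<in> rel_interior \<tau>"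
      using star z by blast
    \<comment> \<open>\<open>x\<close> is in the closure of the cell of \<open>\<tau>\<close>, so \<open>U\<close> meets that cell\<close>
    have "x \<in> closure (rel_interior \<tau>)"
      using \<open>x \<in> \<sigma>\<close> \<tau>(2) closure_subset convex_closure_rel_interior
        simplex_convex_closed(1)[OF simplicial_complex_simplex[OF K \<tau>(1)]] by blast
    then obtain w where "w \<in> U" "w \<in> rel_interior \<tau>"
      using U(1,2) open_Int_closure_eq_empty[OF U(1)] by blast
    then have "w \<in> S"
      using U(3) \<tau>(1) rel_interior_subset by blast
    then show "z \<in> S"
      using cell_saturatedD[OF S \<tau>(1) \<open>w \<in> rel_interior \<tau>\<close>] \<tau>(3) by blast
  qed
  moreover have "y \<in> \<Union>K"
    using \<sigma> y rel_interior_subset by blast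
  ultimately show "y \<in> top_of_set (\<Union>K) interior_of S"
    using Uy by (auto simp: in_interior_of_top_of_set)
qed

lemma path_enters_open_near_start:
  assumes "path \<pi>" "open U" "pathstart \<pi> \<in> U"
  obtains t where "t \<in> {0<..<1}" "\<pi> t \<in> U"
proof -
  have "(\<pi> \<longlongrightarrow> \<pi> 0) (at_right 0)"
    using assms(1) unfolding path_def by (rule continuous_on_Icc_at_rightD) simp
  then have "eventually (\<lambda>t. \<pi> t \<in> U) (at_right 0)"
    using assms(2,3) unfolding pathstart_def by (rule topological_tendstoD)
  then obtain b where "b > 0" "\<And>t. 0 < t \<Longrightarrow> t < b \<Longrightarrow> \<pi> t \<in> U"
    unfolding eventually_at_right_field by auto
  then show ?thesis
    by (intro that[of "min (b/2) (1/2)"]) auto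
qed

lemma path_reroute_start:
  assumes \<pi>: "path \<pi>" "\<pi> ` {0<..<1} \<subseteq> A" and t: "t \<in> {0<..<1}"
    and seg: "open_segment y (\<pi> t) \<subseteq> A"
  defines "g \<equiv> linepath y (\<pi> t) +++ subpath t 1 \<pi>"
  shows "path g" "pathstart g = y" "pathfinish g = pathfinish \<pi>"
    "path_image g \<subseteq> closed_segment y (\<pi> t) \<union> path_image \<pi>" "g ` {0<..<1} \<subseteq> A"
proof -
  have join: "pathfinish (linepath y (\<pi> t)) = pathstart (subpath t 1 \<pi>)" by simp
  show "path g" unfolding g_def
    using \<pi>(1) t by (intro path_join_imp) (auto simp: path_subpath)
  show "pathstart g = y" "pathfinish g = pathfinish \<pi>"
    unfolding g_def pathfinish_join pathfinish_subpath by (simp_all add: pathfinish_def)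
  show "path_image g \<subseteq> closed_segment y (\<pi> t) \<union> path_image \<pi>"
    unfolding g_def path_image_join[OF join]
    using path_image_subpath_subset[of t 1 \<pi>] t by auto
  have "\<pi> t \<in> A" using \<pi>(2) t by blast
  show "g ` {0<..<1} \<subseteq> A"
  proof clarify
    fix r :: real assume r: "r \<in> {0<..<1}"
    show "g r \<in> A"
    proof (cases "r \<le> 1/2")
      case True
      then have "g r = linepath y (\<pi> t) (2*r)"
        unfolding g_def joinpaths_def by simp
      moreover have "linepath y (\<pi> t) (2*r) \<in> open_segment y (\<pi> t) \<union> {\<pi> t}"
        using linepath_in_open_segment[of "2*r" y "\<pi> t"] r True
        by (cases "2*r = 1 \<or> y = \<pi> t") (auto simp: linepath_def)
      ultimately show ?thesis using seg \<open>\<pi> t \<in> A\<close> by auto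
    next
      case False
      then have "g r = \<pi> ((1 - t) * (2*r - 1) + t)"
        unfolding g_def joinpaths_def subpath_def by simp
      moreover have "(1 - t) * (2*r - 1) + t \<in> {0<..<1}"
      proof -
        have "0 \<le> (1 - t) * (2*r - 1)" "(1 - t) * (2*r - 1) < (1 - t) * 1"
          using r t False by (auto intro: mult_strict_left_mono)
        then show ?thesis using t by auto
      qed
      ultimately show ?thesis using \<pi>(2) by auto
    qed
  qed
qed

lemma cell_saturated_reachable:
  assumes K: "simplicial_complex K" and A: "cell_saturated K A"
  shows "cell_saturated K {x \<in> \<Union>K. \<exists>\<pi>. path \<pi> \<and> path_image \<pi> \<subseteq> \<Union>K \<and> pathstart \<pi> = x \<and>
                                   \<pi> ` {0<..<1} \<subseteq> A \<and> pathfinish \<pi> \<in> B}"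
    (is "cell_saturated K ?R")
  unfolding cell_saturated_def
proof (intro ballI impI)
  fix \<sigma> x y assume \<sigma>: "\<sigma> \<in> K" and x: "x \<in> rel_interior \<sigma>" and y: "y \<in> rel_interior \<sigma>"
    and "x \<in> ?R"
  then obtain \<pi> where \<pi>: "path \<pi>" "path_image \<pi> \<subseteq> \<Union>K" "pathstart \<pi> = x"
    "\<pi> ` {0<..<1} \<subseteq> A" "pathfinish \<pi> \<in> B"
    by blast
  obtain U where U: "open U" "x \<in> U"
    and star: "\<And>z. z \<in> U \<Longrightarrow> z \<in> \<Union>K \<Longrightarrow> \<exists>\<tau>\<in>K. \<sigma> \<subseteq> \<tau> \<and> z \<in> rel_interior \<tau>"
    using simplicial_complex_open_star[OF K \<sigma> x] by blast
  have "pathstart \<pi> \<in> U"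
    using \<pi>(3) U(2) by simp
  then obtain t where t: "t \<in> {0<..<1}" "\<pi> t \<in> U"
    using path_enters_open_near_start[OF \<pi>(1) U(1)] by blast
  have "\<pi> t \<in> path_image \<pi>"
    using t(1) unfolding path_image_def by auto
  then have "\<pi> t \<in> \<Union>K"
    using \<pi>(2) by blast
  then obtain \<tau> where \<tau>: "\<tau> \<in> K" "\<sigma> \<subseteq> \<tau>" "\<pi> t \<in> rel_interior \<tau>"
    using star[OF t(2)] by blast
  have "y \<in> \<tau>"
    using y \<tau>(2) rel_interior_subset by blast
  have \<tau>_convex: "convex \<tau>"
    using simplex_convex_closed(1)[OF simplicial_complex_simplex[OF K \<tau>(1)]] .
  \<comment> \<open>the segment from \<open>y\<close> to \<open>\<pi> t\<close> runs inside the cell of \<open>\<tau>\<close>, which lies in \<open>A\<close> as \<open>\<pi> t\<close> does\<close>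
  have "open_segment y (\<pi> t) \<subseteq> rel_interior \<tau>"
    using rel_interior_closure_convex_segment[OF \<tau>_convex \<tau>(3)] \<open>y \<in> \<tau>\<close> closure_subset
    by (auto simp: open_segment_commute)
  moreover have "rel_interior \<tau> \<subseteq> A"
    using cell_saturatedD[OF A \<tau>(1,3)] \<pi>(4) t(1) by blast
  ultimately have "open_segment y (\<pi> t) \<subseteq> A" by blast
  note g = path_reroute_start[OF \<pi>(1,4) t(1) this]
  have "closed_segment y (\<pi> t) \<subseteq> \<Union>K"
    using closed_segment_subset[OF \<open>y \<in> \<tau>\<close> _ \<tau>_convex] \<tau>(1,3) rel_interior_subset by blast
  then have "path_image (linepath y (\<pi> t) +++ subpath t 1 \<pi>) \<subseteq> \<Union>K"
    using g(4) \<pi>(2) by blast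
  moreover have "y \<in> \<Union>K"
    using \<open>y \<in> \<tau>\<close> \<tau>(1) by blast
  ultimately show "y \<in> ?R"
    using g(1,2,3,5) \<pi>(5) by (intro CollectI conjI exI[of _ "linepath y (\<pi> t) +++ subpath t 1 \<pi>"]) auto
qed

lemma sem_subset: "sem P V \<phi> \<subseteq> P"
  using interior_of_subset_topspace[of "top_of_set P"] by (induction \<phi>) auto

lemma sem_cell_saturated:
  assumes "polyhedral_model P K V"
  shows "cell_saturated K (sem P V \<phi>)"
proof -
  have K: "simplicial_complex K" and P: "P = \<Union>K"
    and V: "\<And>p. \<exists>C. C \<subseteq> cells K \<and> V p = \<Union>C"
    using assms unfolding polyhedral_model_def by auto
  show ?thesis
  proof (induction \<phi>)
    case (SAtom p)
    obtain C where "C \<subseteq> cells K" "V p = \<Union>C"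
      using V by blast
    then show ?case
      using cell_saturated_Int[OF cell_saturated_Union_complex cell_saturated_Union_cells[OF K]] P
      by simp
  next
    case (SBox \<phi>)
    then show ?case
      using cell_saturated_interior_of[OF K] P by simp
  next
    case (SGamma \<phi> \<psi>)
    then show ?case
      using cell_saturated_reachable[OF K] P by simp
  qed (simp_all add: P cell_saturated_Union_complex cell_saturated_Int cell_saturated_Diff)
qed

theorem mainTheorem2:
  fixes P :: "'a::euclidean_space set" and K :: "'a set set" and V :: "'p::finite \<Rightarrow> 'a set"
  assumes "polyhedral_model P K V"
  shows "(\<forall>c\<in>cells K. \<forall>x\<in>c. \<forall>y\<in>c. \<forall>\<phi>. x \<in> sem P V \<phi> \<longleftrightarrow> y \<in> sem P V \<phi>)
       \<and> (\<forall>\<phi>. \<exists>C. C \<subseteq> cells K \<and> finite C \<and> sem P V \<phi> = \<Union>C)"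
proof (intro conjI ballI allI)
  have K: "simplicial_complex K" and P: "P = \<Union>K"
    using assms unfolding polyhedral_model_def by auto
  note cells = cells_eq_rel_interior_image[OF K]
  note saturated = sem_cell_saturated[OF assms]
  fix \<phi>
  show "\<exists>C. C \<subseteq> cells K \<and> finite C \<and> sem P V \<phi> = \<Union>C"
  proof (intro exI conjI)
    show "finite {c \<in> cells K. c \<subseteq> sem P V \<phi>}"
      using K unfolding cells simplicial_complex_def by simp
    show "sem P V \<phi> = \<Union>{c \<in> cells K. c \<subseteq> sem P V \<phi>}"
      using cell_saturated_eq_Union_cells[OF K _ saturated] sem_subset P by blast
  qed simp
  fix c x y assume "c \<in> cells K" "x \<in> c" "y \<in> c"
  then show "x \<in> sem P V \<phi> \<longleftrightarrow> y \<in> sem P V \<phi>"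
    using saturated unfolding cells cell_saturated_def by blast
qed

end
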